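(* Let $n\ge 6$ be even. If $n\equiv 2\pmod 4$, no circulant or back-circulant Latin square of order $n$ with inner distance $\frac n2-1$ is a row product. If $n\equiv 0\pmod 4$, exactly $2$ circulant and exactly $2$ back-circulant Latin squares of order $n$ with inner distance $\frac n2-1$ and symbol $1$ in cell $(1,1)$ are row products.
   Context: Symbols are $[1,n]$; $\mathrm{dist}(a,b)$ is the minimum of the residues of $a-b$ and $b-a$ modulo $n$. The inner distance of a Latin square is the minimum of $\mathrm{dist}$ over symbols in horizontally or vertically adjacent cells. A circulant Latin square: each row $i+1$ is row $i$ cyclically shifted one position right; back-circulant: shifted one position left. For a Latin square $L=(m_{i,j})$, $H$ is the $n\times(n-1)$ matrix with $h_{i,j}\equiv m_{i,j+1}-m_{i,j}\pmod n$ and $V$ the $(n-1)\times n$ matrix with $v_{i,j}\equiv m_{i+1,j}-m_{i,j}\pmod n$ (entries in $[0,n-1]$). The difference row of a Latin row $(s_1,\dots,s_n)$ is $(h_1,\dots,h_{n-1})$ with $h_j\equiv s_{j+1}-s_j\pmod n$. A row product is a Latin square obtained by adding a constant mod $n$ to all entries of $\mathrm{prod}(d,d')$, the $n\times n$ matrix with $1$ in cell $(1,1)$ whose $H$ has every row equal to a difference row $d$ and whose $V$ has every column equal to a difference row $d'$. *)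

theory Defs
  imports Main
begin

text \<open>Squares of order n are functions L :: nat => nat => int; cells are (i,j) with
  0-based indices i,j < n (paper's cell (1,1) is (0,0)); symbols are the integers 1..n.\<close>

definition sym_dist :: "nat \<Rightarrow> int \<Rightarrow> int \<Rightarrow> int" where
  "sym_dist n a b = min ((a - b) mod int n) ((b - a) mod int n)"

definition latin_square :: "nat \<Rightarrow> (nat \<Rightarrow> nat \<Rightarrow> int) \<Rightarrow> bool" where
  "latin_square n L \<longleftrightarrow>
     (\<forall>i<n. \<forall>j<n. L i j \<in> {1..int n}) \<and>
     (\<forall>i<n. inj_on (L i) {..<n}) \<and>
     (\<forall>j<n. inj_on (\<lambda>i. L i j) {..<n})"

text \<open>Entries outside the n x n grid are fixed to 0, so that squares of order n
  form a finite set and can be counted.\<close>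
definition square_of_order :: "nat \<Rightarrow> (nat \<Rightarrow> nat \<Rightarrow> int) \<Rightarrow> bool" where
  "square_of_order n L \<longleftrightarrow> (\<forall>i j. (n \<le> i \<or> n \<le> j) \<longrightarrow> L i j = 0)"

definition inner_distance :: "nat \<Rightarrow> (nat \<Rightarrow> nat \<Rightarrow> int) \<Rightarrow> int" where
  "inner_distance n L = Min
     ({sym_dist n (L i j) (L i (j+1)) | i j. i < n \<and> j + 1 < n} \<union>
      {sym_dist n (L i j) (L (i+1) j) | i j. i + 1 < n \<and> j < n})"

definition circulant :: "nat \<Rightarrow> (nat \<Rightarrow> nat \<Rightarrow> int) \<Rightarrow> bool" where
  "circulant n L \<longleftrightarrow> (\<forall>i. i + 1 < n \<longrightarrow> (\<forall>j<n. L (i+1) ((j+1) mod n) = L i j))"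

definition back_circulant :: "nat \<Rightarrow> (nat \<Rightarrow> nat \<Rightarrow> int) \<Rightarrow> bool" where
  "back_circulant n L \<longleftrightarrow> (\<forall>i. i + 1 < n \<longrightarrow> (\<forall>j<n. L (i+1) j = L i ((j+1) mod n)))"

definition is_difference_row :: "nat \<Rightarrow> (nat \<Rightarrow> int) \<Rightarrow> bool" where
  "is_difference_row n d \<longleftrightarrow>
     (\<exists>s :: nat \<Rightarrow> int. (\<forall>j<n. s j \<in> {1..int n}) \<and> inj_on s {..<n} \<and>
        (\<forall>j. j + 1 < n \<longrightarrow> d j = (s (j+1) - s j) mod int n))"

text \<open>M is prod(d,d'): symbol 1 in cell (0,0), every row of H equal to d,
  every column of V equal to d'.\<close>
definition is_prod :: "nat \<Rightarrow> (nat \<Rightarrow> int) \<Rightarrow> (nat \<Rightarrow> int) \<Rightarrow> (nat \<Rightarrow> nat \<Rightarrow> int) \<Rightarrow> bool" where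
  "is_prod n d d' M \<longleftrightarrow>
     M 0 0 = 1 \<and> (\<forall>i<n. \<forall>j<n. M i j \<in> {1..int n}) \<and>
     (\<forall>i<n. \<forall>j. j + 1 < n \<longrightarrow> (M i (j+1) - M i j) mod int n = d j) \<and>
     (\<forall>i j. i + 1 < n \<longrightarrow> j < n \<longrightarrow> (M (i+1) j - M i j) mod int n = d' i)"

text \<open>L is obtained from prod(d,d') (d, d' difference rows) by adding a constant
  mod n to all entries (symbols kept in 1..n).\<close>
definition row_product :: "nat \<Rightarrow> (nat \<Rightarrow> nat \<Rightarrow> int) \<Rightarrow> bool" where
  "row_product n L \<longleftrightarrow>
     (\<exists>d d' M c. is_difference_row n d \<and> is_difference_row n d' \<and> is_prod n d d' M \<and>
        (\<forall>i<n. \<forall>j<n. L i j = (M i j - 1 + c) mod int n + 1))"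

end

theory Submission
  imports Defs
begin

text \<open>In a row product the difference between two consecutive rows is the same in every
  column. In a circulant (back-circulant) square row 1 is row 0 shifted, so this constant says
  that row 0 is an arithmetic progression modulo n with some step r, and all horizontal
  distances in row 0 equal the distance of r from 0. With n = 2h, inner distance h - 1 forces
  r \<in> {h - 1, h, h + 1}, and r = h is impossible since then 2r \<equiv> 0 and the symbol of column 2
  repeats that of column 0. If n \<equiv> 2 (mod 4), h is odd, so r = h \<pm> 1 is even, h r \<equiv> 0
  and column h repeats column 0. If n \<equiv> 0 (mod 4), both h \<pm> 1 are coprime to n, the square
  is determined by its first row and the shift, and the two resulting squares
  (j r \<mp> i r) mod n + 1 are indeed Latin row products of inner distance h - 1.\<close>

lemma eq_if_dvd_diff_less:
  fixes a b :: int
  assumes "int n dvd a - b" and "\<bar>a - b\<bar> < int n"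
  shows "a = b"
  using dvd_imp_le_int[of "a - b" "int n"] assms by fastforce

lemma symbol_eq_if_mod_eq:
  fixes a b :: int
  assumes "a \<in> {1..int n}" and "b \<in> {1..int n}" and "a mod int n = b mod int n"
  shows "a = b"
  using assms by (intro eq_if_dvd_diff_less[of n]) (auto simp: mod_eq_dvd_iff)

lemma coprime_four_mult_odd_neighbour:
  fixes m a :: int
  assumes "a = 2*m - 1 \<or> a = 2*m + 1"
  shows "coprime (4*m) a"
proof -
  have "coprime (2*m) a" using assms
    by (metis coprime_add_one_right coprime_diff_one_left coprime_commute)
  moreover have "coprime 2 a" using assms by auto
  ultimately show ?thesis
    using coprime_mult_left_iff[of 2 "2*m" a] by simp
qed

lemma mod_diff_eq_if_mod_eq_add:
  fixes x y r m :: int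
  assumes "y mod m = (x + r) mod m"
  shows "(y - x) mod m = r mod m"
  by (metis assms add_diff_cancel_left' mod_diff_left_eq)

lemma sym_dist_step:
  assumes "y mod int n = (x + r) mod int n"
  shows "sym_dist n x y = sym_dist n 0 r"
proof -
  have "(y - x) mod int n = r mod int n"
    using assms by (rule mod_diff_eq_if_mod_eq_add)
  moreover have "(x - y) mod int n = (x - (x + r)) mod int n"
    by (metis assms mod_diff_right_eq)
  ultimately show ?thesis unfolding sym_dist_def by simp
qed

lemma sym_dist_zero_uminus: "sym_dist n 0 (- r) = sym_dist n 0 r"
  unfolding sym_dist_def by (simp add: min.commute)

lemma sym_dist_zero_eq:
  assumes "0 < r" and "r < int n"
  shows "sym_dist n 0 r = min (int n - r) r"
proof -
  have "(- r) mod int n = int n - r"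
    using assms by (simp add: zmod_zminus1_eq_if)
  thus ?thesis unfolding sym_dist_def using assms by simp
qed

lemma sym_dist_half_pm_one:
  fixes m a :: int
  assumes "int n = 4*m" and "1 \<le> m" and "a = 2*m - 1 \<or> a = 2*m + 1"
  shows "sym_dist n 0 a = 2*m - 1"
  using assms sym_dist_zero_eq[of a n] by auto

lemma step_near_half_if_sym_dist_large:
  fixes r h :: int
  assumes "0 \<le> r" and "r < int n" and "int n = 2*h" and "2 \<le> h" and "h - 1 \<le> sym_dist n 0 r"
  shows "r = h - 1 \<or> r = h \<or> r = h + 1"
proof (cases "r = 0")
  case True
  thus ?thesis using assms by (simp add: sym_dist_def)
next
  case False
  thus ?thesis using assms sym_dist_zero_eq[of r n] by auto
qed

lemma inner_distance_le_horizontal: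
  assumes "i < n" and "j + 1 < n"
  shows "inner_distance n L \<le> sym_dist n (L i j) (L i (j+1))"
proof -
  let ?A = "{sym_dist n (L i j) (L i (j+1)) | i j. i < n \<and> j + 1 < n}"
  let ?B = "{sym_dist n (L i j) (L (i+1) j) | i j. i + 1 < n \<and> j < n}"
  have A: "?A \<subseteq> (\<lambda>(i,j). sym_dist n (L i j) (L i (j+1))) ` ({..<n} \<times> {..<n})"
    and B: "?B \<subseteq> (\<lambda>(i,j). sym_dist n (L i j) (L (i+1) j)) ` ({..<n} \<times> {..<n})"
    by auto
  have "finite (?A \<union> ?B)" using finite_subset[OF A] finite_subset[OF B] by simp
  moreover have "sym_dist n (L i j) (L i (j+1)) \<in> ?A \<union> ?B" using assms by blast
  ultimately show ?thesis unfolding inner_distance_def by (rule Min_le)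
qed

lemma inner_distance_eq_const:
  assumes "2 \<le> n"
    and "\<And>i j. i < n \<Longrightarrow> j + 1 < n \<Longrightarrow> sym_dist n (L i j) (L i (j+1)) = v"
    and "\<And>i j. i + 1 < n \<Longrightarrow> j < n \<Longrightarrow> sym_dist n (L i j) (L (i+1) j) = v"
  shows "inner_distance n L = v"
proof -
  have "{sym_dist n (L i j) (L i (j+1)) | i j. i < n \<and> j + 1 < n} \<union>
      {sym_dist n (L i j) (L (i+1) j) | i j. i + 1 < n \<and> j < n} = {v}"
  proof
    have "sym_dist n (L 0 0) (L 0 (0+1)) = v" and "0 < n" and "0 + 1 < n"
      using assms(1,2) by auto
    thus "{v} \<subseteq> {sym_dist n (L i j) (L i (j+1)) | i j. i < n \<and> j + 1 < n} \<union>
      {sym_dist n (L i j) (L (i+1) j) | i j. i + 1 < n \<and> j < n}" by blast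
  qed (use assms in fastforce)
  thus ?thesis unfolding inner_distance_def by simp
qed

lemma mod_progression:
  assumes "\<And>j. j + 1 < n \<Longrightarrow> s (j+1) mod int n = (s j + r) mod int n" and "j < n"
  shows "s j mod int n = (s 0 + int j * r) mod int n"
  using \<open>j < n\<close>
proof (induction j)
  case 0
  show ?case by simp
next
  case (Suc j)
  have "s (Suc j) mod int n = (s j mod int n + r) mod int n"
    using assms(1) Suc.prems by (simp add: mod_add_left_eq)
  also have "\<dots> = (s 0 + int j * r + r) mod int n"
    using Suc by (simp add: mod_add_left_eq)
  finally show ?case by (simp add: algebra_simps)
qed

lemma injective_progression_not_periodic:
  fixes s :: "nat \<Rightarrow> int"
  assumes "\<forall>j<n. s j \<in> {1..int n}" and "inj_on s {..<n}"
    and "\<forall>j<n. s j mod int n = (s 0 + int j * r) mod int n"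
    and "0 < k" and "k < n"
  shows "\<not> int n dvd int k * r"
proof
  assume "int n dvd int k * r"
  hence "(s 0 + int k * r) mod int n = s 0 mod int n"
    by (simp add: mod_add_right_eq[symmetric, of "s 0"])
  hence "s k mod int n = s 0 mod int n" using assms(3,5) by metis
  moreover have "s k \<in> {1..int n}" and "s 0 \<in> {1..int n}" using assms(1,4,5) by auto
  ultimately have "s k = s 0" by (metis symbol_eq_if_mod_eq)
  thus False using assms(2,4,5) inj_onD[of s "{..<n}" k 0] by simp
qed

lemma row_product_vertical_diff_const:
  assumes "row_product n L" and "i + 1 < n" and "j < n" and "j' < n"
  shows "(L (i+1) j - L i j) mod int n = (L (i+1) j' - L i j') mod int n"
proof -
  obtain d d' M c where M: "is_prod n d d' M"
    and L: "\<forall>i<n. \<forall>j<n. L i j = (M i j - 1 + c) mod int n + 1"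
    using assms(1) unfolding row_product_def by blast
  have "(L (i+1) k - L i k) mod int n = d' i" if "k < n" for k
  proof -
    have "(L (i+1) k - L i k) mod int n = ((M (i+1) k - 1 + c) - (M i k - 1 + c)) mod int n"
      using L assms(2) that by (simp add: mod_diff_eq)
    also have "\<dots> = d' i" using M assms(2) that unfolding is_prod_def by simp
    finally show ?thesis .
  qed
  thus ?thesis using assms(3,4) by simp
qed

lemma circulant_first_row_step:
  assumes "circulant n L" and "\<forall>j<n. (L 1 j - L 0 j) mod int n = \<delta>" and "j + 1 < n"
  shows "L 0 (j+1) mod int n = (L 0 j - \<delta>) mod int n"
proof -
  have "L 1 (j+1) = L 0 j"
    using assms(1)[unfolded circulant_def, rule_format, of 0 j] assms(3) by simp
  hence "\<delta> = (L 0 j - L 0 (j+1)) mod int n" using assms(2)[rule_format, of "j+1"] assms(3) by simp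
  thus ?thesis by (simp add: mod_diff_right_eq)
qed

lemma back_circulant_first_row_step:
  assumes "back_circulant n L" and "\<forall>j<n. (L 1 j - L 0 j) mod int n = \<delta>" and "j + 1 < n"
  shows "L 0 (j+1) mod int n = (L 0 j + \<delta>) mod int n"
proof -
  have "L 1 j = L 0 (j+1)"
    using assms(1)[unfolded back_circulant_def, rule_format, of 0 j] assms(3) by simp
  hence "\<delta> = (L 0 (j+1) - L 0 j) mod int n" using assms(2)[rule_format, of j] assms(3) by simp
  thus ?thesis by (simp add: mod_add_right_eq)
qed

lemma row_product_first_row_progression:
  assumes "1 < n" and "row_product n L" and "circulant n L \<or> back_circulant n L"
  obtains r where "0 \<le> r" and "r < int n"
    and "\<forall>j<n. L 0 j mod int n = (L 0 0 + int j * r) mod int n"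
proof -
  define \<delta> where "\<delta> = (L 1 0 - L 0 0) mod int n"
  have vertical: "\<forall>j<n. (L 1 j - L 0 j) mod int n = \<delta>"
  proof (intro allI impI)
    fix j assume "j < n"
    thus "(L 1 j - L 0 j) mod int n = \<delta>"
      unfolding \<delta>_def using row_product_vertical_diff_const[OF assms(2), of 0 j 0] assms(1) by simp
  qed
  define r where "r = (if circulant n L then - \<delta> else \<delta>) mod int n"
  have "L 0 (j+1) mod int n = (L 0 j + r) mod int n" if "j + 1 < n" for j
  proof (cases "circulant n L")
    case True
    have "(L 0 j + r) mod int n = (L 0 j + - \<delta>) mod int n"
      unfolding r_def using True by (simp add: mod_add_right_eq)
    thus ?thesis using circulant_first_row_step[OF True vertical that] by simp
  next
    case False
    have "(L 0 j + r) mod int n = (L 0 j + \<delta>) mod int n"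
      unfolding r_def using False by (simp add: mod_add_right_eq)
    moreover have "back_circulant n L" using False assms(3) by simp
    ultimately show ?thesis using back_circulant_first_row_step[OF _ vertical that] by simp
  qed
  hence "\<forall>j<n. L 0 j mod int n = (L 0 0 + int j * r) mod int n"
    using mod_progression[of n "L 0" r] by blast
  moreover have "0 \<le> r" "r < int n" using assms(1) by (simp_all add: r_def)
  ultimately show ?thesis using that by blast
qed

lemma first_row_step_near_half:
  fixes h r :: int
  assumes "int n = 2*h" and "2 \<le> h" and "latin_square n L" and "inner_distance n L = h - 1"
    and "0 \<le> r" and "r < int n"
    and progression: "\<forall>j<n. L 0 j mod int n = (L 0 0 + int j * r) mod int n"
  shows "r = h - 1 \<or> r = h + 1"
proof -
  have n: "2 < n" using assms(1,2) by linarith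
  have "h - 1 \<le> sym_dist n (L 0 0) (L 0 (0+1))"
    using inner_distance_le_horizontal[of 0 n 0 L] assms(4) n by simp
  also have "\<dots> = sym_dist n 0 r"
    using progression[rule_format, of 1] n by (intro sym_dist_step) simp
  finally have "r = h - 1 \<or> r = h \<or> r = h + 1"
    using assms(1,2,5,6) by (intro step_near_half_if_sym_dist_large) auto
  moreover have "\<forall>j<n. L 0 j \<in> {1..int n}" and "inj_on (L 0) {..<n}"
    using assms(3) n unfolding latin_square_def by auto
  hence "\<not> int n dvd int 2 * r"
    using injective_progression_not_periodic[OF _ _ progression, of 2] n by simp
  ultimately show ?thesis using assms(1) by auto
qed

lemma not_row_product_if_mod_4_eq_2:
  assumes "n mod 4 = 2" and "6 \<le> n" and "latin_square n L"
    and "circulant n L \<or> back_circulant n L" and "inner_distance n L = int n div 2 - 1"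
  shows "\<not> row_product n L"
proof
  assume "row_product n L"
  then obtain r where r: "0 \<le> r" "r < int n"
    and progression: "\<forall>j<n. L 0 j mod int n = (L 0 0 + int j * r) mod int n"
    using row_product_first_row_progression[of n L] assms(2,4) by auto
  obtain t where t: "n = 4*t + 2" using assms(1) by (metis div_mult_mod_eq mult.commute)
  define h where "h = 2*t + 1"
  have "r = int h - 1 \<or> r = int h + 1"
    using first_row_step_near_half[where h = "int h", OF _ _ assms(3) _ r progression]
      assms(2,5) t
    by (simp add: h_def)
  hence "even r" by (auto simp: h_def)
  then obtain u where "r = 2 * u" by (elim evenE)
  hence "int h * r = int n * u" using t by (simp add: h_def algebra_simps)
  hence "int n dvd int h * r" by simp
  moreover have "\<forall>j<n. L 0 j \<in> {1..int n}" and "inj_on (L 0) {..<n}"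
    using assms(3) t unfolding latin_square_def by auto
  hence "\<not> int n dvd int h * r"
    using injective_progression_not_periodic[OF _ _ progression, of h] t by (simp add: h_def)
  ultimately show False by contradiction
qed

definition linear_square :: "nat \<Rightarrow> int \<Rightarrow> int \<Rightarrow> nat \<Rightarrow> nat \<Rightarrow> int" where
  "linear_square n a b i j = (if i < n \<and> j < n then (int j * a + int i * b) mod int n + 1 else 0)"

lemma square_of_order_linear_square: "square_of_order n (linear_square n a b)"
  unfolding square_of_order_def linear_square_def by auto

lemma linear_square_first_row: "j < n \<Longrightarrow> linear_square n a b 0 j = (int j * a) mod int n + 1"
  unfolding linear_square_def by simp

lemma linear_square_symbol: "i < n \<Longrightarrow> j < n \<Longrightarrow> linear_square n a b i j \<in> {1..int n}"
  unfolding linear_square_def by (simp add: add1_zle_eq)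

lemma inj_on_linear_mod:
  fixes a c :: int
  assumes "coprime (int n) a"
  shows "inj_on (\<lambda>j. (int j * a + c) mod int n) {..<n}"
proof (rule inj_onI)
  fix x y assume "x \<in> {..<n}" and "y \<in> {..<n}"
    and "(int x * a + c) mod int n = (int y * a + c) mod int n"
  hence "int n dvd (int x - int y) * a" and "\<bar>int x - int y\<bar> < int n"
    by (auto simp: mod_eq_dvd_iff algebra_simps)
  hence "int x = int y"
    using assms by (intro eq_if_dvd_diff_less[of n]) (auto simp: coprime_dvd_mult_left_iff)
  thus "x = y" by simp
qed

lemma linear_square_latin:
  assumes "coprime (int n) a" and "coprime (int n) b"
  shows "latin_square n (linear_square n a b)"
  unfolding latin_square_def
proof (intro conjI allI impI)
  fix i assume "i < n"
  thus "inj_on (linear_square n a b i) {..<n}"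
    using inj_on_linear_mod[OF assms(1), of "int i * b"]
    unfolding linear_square_def inj_on_def by auto
next
  fix j assume "j < n"
  thus "inj_on (\<lambda>i. linear_square n a b i j) {..<n}"
    using inj_on_linear_mod[OF assms(2), of "int j * a"]
    unfolding linear_square_def inj_on_def by (auto simp: add.commute)
qed (rule linear_square_symbol)

lemma linear_square_horizontal_step:
  "i < n \<Longrightarrow> j + 1 < n \<Longrightarrow>
    linear_square n a b i (j+1) mod int n = (linear_square n a b i j + a) mod int n"
  unfolding linear_square_def by (simp add: algebra_simps) (metis mod_add_right_eq)

lemma linear_square_vertical_step:
  "i + 1 < n \<Longrightarrow> j < n \<Longrightarrow>
    linear_square n a b (i+1) j mod int n = (linear_square n a b i j + b) mod int n"
  unfolding linear_square_def by (simp add: algebra_simps) (metis mod_add_right_eq)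

lemma linear_square_circulant:
  assumes "0 < n"
  shows "circulant n (linear_square n a (- a))"
  unfolding circulant_def
proof (intro allI impI)
  fix i j assume i: "i + 1 < n" and j: "j < n"
  have "int ((j+1) mod n) = (int j + 1) mod int n"
    using zmod_int[of "j+1" n] by (simp add: add.commute)
  hence "(int ((j+1) mod n) * a + int (i+1) * (- a)) mod int n
       = ((int j + 1) * a + int (i+1) * (- a)) mod int n"
    by (metis mod_add_left_eq mod_mult_left_eq)
  also have "\<dots> = (int j * a + int i * (- a)) mod int n" by (simp add: algebra_simps)
  finally show "linear_square n a (- a) (i+1) ((j+1) mod n) = linear_square n a (- a) i j"
    using i j assms unfolding linear_square_def by simp
qed

lemma linear_square_back_circulant:
  assumes "0 < n"
  shows "back_circulant n (linear_square n a a)"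
  unfolding back_circulant_def
proof (intro allI impI)
  fix i j assume i: "i + 1 < n" and j: "j < n"
  have "int ((j+1) mod n) = (int j + 1) mod int n"
    using zmod_int[of "j+1" n] by (simp add: add.commute)
  hence "(int ((j+1) mod n) * a + int i * a) mod int n = ((int j + 1) * a + int i * a) mod int n"
    by (metis mod_add_left_eq mod_mult_left_eq)
  also have "\<dots> = (int j * a + int (i+1) * a) mod int n" by (simp add: algebra_simps)
  finally show "linear_square n a a (i+1) j = linear_square n a a i ((j+1) mod n)"
    using i j assms unfolding linear_square_def by simp
qed

lemma is_difference_row_const:
  assumes "0 < n" and "coprime (int n) a"
  shows "is_difference_row n (\<lambda>_. a mod int n)"
  unfolding is_difference_row_def
proof (intro exI conjI allI impI)
  show "inj_on (linear_square n a a 0) {..<n}"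
    using linear_square_latin[OF assms(2) assms(2)] assms(1) unfolding latin_square_def by simp
  fix j
  show "j < n \<Longrightarrow> linear_square n a a 0 j \<in> {1..int n}" using assms(1) by (rule linear_square_symbol)
  show "j + 1 < n \<Longrightarrow> a mod int n = (linear_square n a a 0 (j+1) - linear_square n a a 0 j) mod int n"
    using linear_square_horizontal_step[of 0 n j] assms(1) mod_diff_eq_if_mod_eq_add by metis
qed

lemma linear_square_row_product:
  assumes "0 < n" and "coprime (int n) a" and "coprime (int n) b"
  shows "row_product n (linear_square n a b)"
  unfolding row_product_def
proof (intro exI conjI allI impI)
  show "is_difference_row n (\<lambda>_. a mod int n)" "is_difference_row n (\<lambda>_. b mod int n)"
    using is_difference_row_const assms by blast+
  show "is_prod n (\<lambda>_. a mod int n) (\<lambda>_. b mod int n) (linear_square n a b)"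
    unfolding is_prod_def
    using assms(1) linear_square_symbol[of _ n _ a b]
      linear_square_horizontal_step[of _ n _ a b] linear_square_vertical_step[of _ n _ a b]
    by (auto simp: linear_square_def[of n a b 0 0] intro: mod_diff_eq_if_mod_eq_add)
  fix i j assume "i < n" "j < n"
  thus "linear_square n a b i j = (linear_square n a b i j - 1 + 0) mod int n + 1"
    unfolding linear_square_def by simp
qed

lemma linear_square_inner_distance:
  assumes "2 \<le> n" and "sym_dist n 0 a = v" and "sym_dist n 0 b = v"
  shows "inner_distance n (linear_square n a b) = v"
proof (rule inner_distance_eq_const[OF assms(1)])
  fix i j
  show "i < n \<Longrightarrow> j + 1 < n \<Longrightarrow>
      sym_dist n (linear_square n a b i j) (linear_square n a b i (j+1)) = v"
    using assms(2) linear_square_horizontal_step sym_dist_step by metis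
  show "i + 1 < n \<Longrightarrow> j < n \<Longrightarrow>
      sym_dist n (linear_square n a b i j) (linear_square n a b (i+1) j) = v"
    using assms(3) linear_square_vertical_step sym_dist_step by metis
qed

lemma linear_square_half_pm_one:
  fixes m a b :: int
  assumes "int n = 4*m" and "1 \<le> m" and "a = 2*m - 1 \<or> a = 2*m + 1" and "b = a \<or> b = - a"
  shows "square_of_order n (linear_square n a b) \<and> latin_square n (linear_square n a b) \<and>
    inner_distance n (linear_square n a b) = int n div 2 - 1 \<and> linear_square n a b 0 0 = 1 \<and>
    row_product n (linear_square n a b)"
proof -
  have n: "0 < n" using assms(1,2) by linarith
  have a: "coprime (int n) a" and b: "coprime (int n) b"
    using coprime_four_mult_odd_neighbour[OF assms(3)] assms(1,4) by auto
  have "sym_dist n 0 a = 2*m - 1" and "sym_dist n 0 b = 2*m - 1"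
    using sym_dist_half_pm_one[OF assms(1-3)] assms(4) sym_dist_zero_uminus by auto
  hence "inner_distance n (linear_square n a b) = 2*m - 1"
    using assms(1,2) by (intro linear_square_inner_distance) auto
  thus ?thesis
    using square_of_order_linear_square linear_square_latin[OF a b] linear_square_row_product[OF n a b]
      linear_square_first_row[OF n] assms(1) by simp
qed

lemma card_linear_square_pair:
  fixes m :: int
  assumes "int n = 4*m" and "1 \<le> m"
  shows "card {linear_square n (2*m - 1) b, linear_square n (2*m + 1) b'} = 2"
proof -
  have "linear_square n (2*m - 1) b 0 1 = 2*m" and "linear_square n (2*m + 1) b' 0 1 = 2*m + 2"
    using assms linear_square_first_row[of 1 n] by auto
  hence "linear_square n (2*m - 1) b \<noteq> linear_square n (2*m + 1) b'" by auto
  thus ?thesis by simp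
qed

lemma circulant_eq_if_first_row_eq:
  assumes "square_of_order n L" and "square_of_order n L'" and "circulant n L" and "circulant n L'"
    and "\<forall>j<n. L 0 j = L' 0 j"
  shows "L = L'"
proof -
  have "\<forall>j<n. L i j = L' i j" if "i < n" for i
    using that
  proof (induction i)
    case 0
    thus ?case using assms(5) by simp
  next
    case (Suc i)
    show ?case
    proof (intro allI impI)
      fix j assume j: "j < n"
      define k where "k = (j + n - 1) mod n"
      have "(k + 1) mod n = (j + n - 1 + 1) mod n" unfolding k_def by (rule mod_add_left_eq)
      also have "\<dots> = j" using j by simp
      finally have "(k + 1) mod n = j" .
      moreover have "k < n" using j unfolding k_def by simp
      ultimately show "L (Suc i) j = L' (Suc i) j"
        using assms(3,4) Suc unfolding circulant_def by (metis Suc_eq_plus1 Suc_lessD)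
    qed
  qed
  thus ?thesis using assms(1,2) unfolding square_of_order_def by (metis not_le ext)
qed

lemma back_circulant_eq_if_first_row_eq:
  assumes "square_of_order n L" and "square_of_order n L'" and "back_circulant n L"
    and "back_circulant n L'" and "\<forall>j<n. L 0 j = L' 0 j"
  shows "L = L'"
proof -
  have "\<forall>j<n. L i j = L' i j" if "i < n" for i
    using that
  proof (induction i)
    case 0
    thus ?case using assms(5) by simp
  next
    case (Suc i)
    thus ?case
      using assms(3,4) unfolding back_circulant_def
      by (metis Suc_eq_plus1 Suc_lessD mod_less_divisor zero_less_Suc less_trans)
  qed
  thus ?thesis using assms(1,2) unfolding square_of_order_def by (metis not_le ext)
qed

lemma first_row_eq_linear_square:
  fixes m :: int
  assumes "int n = 4*m" and "1 \<le> m" and "latin_square n L"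
    and "circulant n L \<or> back_circulant n L" and "inner_distance n L = int n div 2 - 1"
    and "L 0 0 = 1" and "row_product n L"
  obtains r where "r = 2*m - 1 \<or> r = 2*m + 1" and "\<forall>b. \<forall>j<n. L 0 j = linear_square n r b 0 j"
proof -
  obtain r where r: "0 \<le> r" "r < int n"
    and progression: "\<forall>j<n. L 0 j mod int n = (L 0 0 + int j * r) mod int n"
    using row_product_first_row_progression[of n L] assms(1,2,4,7) by auto
  have "r = 2*m - 1 \<or> r = 2*m + 1"
    using first_row_step_near_half[where h = "2*m", OF _ _ assms(3) _ r progression] assms(1,2,5)
    by simp
  moreover have "L 0 j = linear_square n r b 0 j" if "j < n" for b j
  proof (rule symbol_eq_if_mod_eq)
    show "L 0 j \<in> {1..int n}" using assms(3) that unfolding latin_square_def by auto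
    show "linear_square n r b 0 j \<in> {1..int n}" using linear_square_symbol[of 0 n j] that by simp
    show "L 0 j mod int n = linear_square n r b 0 j mod int n"
      using progression[rule_format, OF that] assms(6) linear_square_first_row[OF that]
      by (simp add: mod_add_left_eq add.commute[of 1])
  qed
  ultimately show ?thesis using that by blast
qed

lemma circulant_row_products_mod_4_eq_0:
  fixes m :: int
  assumes "int n = 4*m" and "1 \<le> m"
  shows "{L. square_of_order n L \<and> latin_square n L \<and> circulant n L \<and>
             inner_distance n L = int n div 2 - 1 \<and> L 0 0 = 1 \<and> row_product n L}
       = {linear_square n (2*m - 1) (- (2*m - 1)), linear_square n (2*m + 1) (- (2*m + 1))}"
    (is "?S = ?T")
proof
  have n: "0 < n" using assms by linarith
  show "?T \<subseteq> ?S"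
    using linear_square_half_pm_one[OF assms]
      linear_square_circulant[OF n, of "2*m - 1"] linear_square_circulant[OF n, of "2*m + 1"]
    by auto
  show "?S \<subseteq> ?T"
  proof
    fix L assume "L \<in> ?S"
    hence L: "square_of_order n L" "latin_square n L" "circulant n L"
      "inner_distance n L = int n div 2 - 1" "L 0 0 = 1" "row_product n L" by auto
    then obtain r where r: "r = 2*m - 1 \<or> r = 2*m + 1"
      and "\<forall>b. \<forall>j<n. L 0 j = linear_square n r b 0 j"
      using first_row_eq_linear_square[OF assms] by metis
    hence "L = linear_square n r (- r)"
      using circulant_eq_if_first_row_eq square_of_order_linear_square linear_square_circulant[OF n] L
      by metis
    thus "L \<in> ?T" using r by auto
  qed
qed

lemma back_circulant_row_products_mod_4_eq_0:
  fixes m :: int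
  assumes "int n = 4*m" and "1 \<le> m"
  shows "{L. square_of_order n L \<and> latin_square n L \<and> back_circulant n L \<and>
             inner_distance n L = int n div 2 - 1 \<and> L 0 0 = 1 \<and> row_product n L}
       = {linear_square n (2*m - 1) (2*m - 1), linear_square n (2*m + 1) (2*m + 1)}"
    (is "?S = ?T")
proof
  have n: "0 < n" using assms by linarith
  show "?T \<subseteq> ?S"
    using linear_square_half_pm_one[OF assms] linear_square_back_circulant[OF n] by auto
  show "?S \<subseteq> ?T"
  proof
    fix L assume "L \<in> ?S"
    hence L: "square_of_order n L" "latin_square n L" "back_circulant n L"
      "inner_distance n L = int n div 2 - 1" "L 0 0 = 1" "row_product n L" by auto
    then obtain r where r: "r = 2*m - 1 \<or> r = 2*m + 1"
      and "\<forall>b. \<forall>j<n. L 0 j = linear_square n r b 0 j"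
      using first_row_eq_linear_square[OF assms] by metis
    hence "L = linear_square n r r"
      using back_circulant_eq_if_first_row_eq square_of_order_linear_square
        linear_square_back_circulant[OF n] L
      by metis
    thus "L \<in> ?T" using r by auto
  qed
qed

theorem mainTheorem13:
  fixes n :: nat
  assumes "n \<ge> 6" and "even n"
  shows "(n mod 4 = 2 \<longrightarrow>
            (\<forall>L. latin_square n L \<and> (circulant n L \<or> back_circulant n L) \<and>
                 inner_distance n L = int n div 2 - 1 \<longrightarrow> \<not> row_product n L)) \<and>
         (n mod 4 = 0 \<longrightarrow>
            card {L. square_of_order n L \<and> latin_square n L \<and> circulant n L \<and>
                     inner_distance n L = int n div 2 - 1 \<and> L 0 0 = 1 \<and> row_product n L} = 2 \<and>
            card {L. square_of_order n L \<and> latin_square n L \<and> back_circulant n L \<and>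
                     inner_distance n L = int n div 2 - 1 \<and> L 0 0 = 1 \<and> row_product n L} = 2)"
proof (intro conjI impI allI)
  fix L
  assume "n mod 4 = 2" and "latin_square n L \<and> (circulant n L \<or> back_circulant n L) \<and>
    inner_distance n L = int n div 2 - 1"
  thus "\<not> row_product n L" using not_row_product_if_mod_4_eq_2 assms(1) by blast
next
  assume "n mod 4 = 0"
  then obtain m where m: "int n = 4 * int m" "1 \<le> int m" using assms(1) by auto
  show "card {L. square_of_order n L \<and> latin_square n L \<and> circulant n L \<and>
      inner_distance n L = int n div 2 - 1 \<and> L 0 0 = 1 \<and> row_product n L} = 2"
    unfolding circulant_row_products_mod_4_eq_0[OF m] by (rule card_linear_square_pair[OF m])
  show "card {L. square_of_order n L \<and> latin_square n L \<and> back_circulant n L \<and>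
      inner_distance n L = int n div 2 - 1 \<and> L 0 0 = 1 \<and> row_product n L} = 2"
    unfolding back_circulant_row_products_mod_4_eq_0[OF m] by (rule card_linear_square_pair[OF m])
qed

end
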